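(* Let $(\Omega,\mathcal{A},\mathbb{P})$ be a probability space and $k\colon\Omega\times\mathbb{R}\times\mathbb{R}\to\mathbb{R}$ jointly measurable with $|k(\omega,s,t)|\le1$ almost surely, and define $K(s,t)=\mathbb{E}_\omega[k(\omega,s,t)]$, assumed continuous and positive definite. Let $\rho$ be a Borel probability measure on $Z=\mathbb{R}^d\times\mathbb{R}\times\mathbb{R}$ with compact support $S$. For $c\in L^2(\rho)$ set $$f_c(x)=\int_S c(a,b,t)K(\langle a,x\rangle+b,t)\,d\rho(a,b,t),\qquad x\in\mathbb{R}^d.$$ Then the subclass $H^{\mathrm{cont}}_\rho=\{f_c:c\in C(S)\}$ is dense in $H_\rho=\{f_c:c\in L^2(\rho)\}$ with respect to the uniform norm on any compact set $X\subset\mathbb{R}^d$. *)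

theory Defs
  imports "HOL-Probability.Probability"
begin

definition pos_def_kernel :: "(real \<Rightarrow> real \<Rightarrow> real) \<Rightarrow> bool" where
  "pos_def_kernel K \<longleftrightarrow>
     (\<forall>(n::nat) (xs::nat \<Rightarrow> real) (\<alpha>::nat \<Rightarrow> real).
        0 \<le> (\<Sum>i<n. \<Sum>j<n. \<alpha> i * \<alpha> j * K (xs i) (xs j)))"

definition measure_support :: "'a::topological_space measure \<Rightarrow> 'a set" where
  "measure_support \<rho> = {z. \<forall>U. open U \<and> z \<in> U \<longrightarrow> emeasure \<rho> U > 0}"

definition square_integrable :: "'a measure \<Rightarrow> ('a \<Rightarrow> real) \<Rightarrow> bool" where
  "square_integrable \<rho> c \<longleftrightarrow>
     c \<in> borel_measurable \<rho> \<and> integrable \<rho> (\<lambda>z. (c z)\<^sup>2)"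

definition f_c ::
  "((real^'n) \<times> real \<times> real) measure \<Rightarrow> (real \<Rightarrow> real \<Rightarrow> real)
    \<Rightarrow> ((real^'n) \<times> real \<times> real \<Rightarrow> real) \<Rightarrow> (real^'n) \<Rightarrow> real" where
  "f_c \<rho> K c x =
     (\<integral>z\<in>measure_support \<rho>. c z * K (fst z \<bullet> x + fst (snd z)) (snd (snd z)) \<partial>\<rho>)"

end

theory Submission
  imports Defs
begin

(*
  Since |k| <= 1 almost surely, |K| <= 1, hence |f_c x - f_g x| <= ||c - g||_{L^1(rho)} for every
  x.  It therefore suffices that bounded continuous functions are dense in L^1 of a finite Borel
  measure on a Euclidean space: indicators of Borel sets are approximated by inner and outer
  regularity together with Urysohn's lemma, and the approximable functions are closed under sums
  and under dominated pointwise limits.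

  The approximation is thus uniform on all of R^d.
*)

definition L1_approx_bounded_continuous :: "'a::topological_space measure \<Rightarrow> ('a \<Rightarrow> real) \<Rightarrow> bool"
  where "L1_approx_bounded_continuous M f \<longleftrightarrow>
    (\<forall>\<delta>>0. \<exists>g. continuous_on UNIV g \<and> bounded (range g) \<and> (\<integral>x. \<bar>f x - g x\<bar> \<partial>M) < \<delta>)"

lemma integrable_bounded_continuous:
  fixes g :: "'a::topological_space \<Rightarrow> real"
  assumes "finite_measure M" "sets M = sets borel" "continuous_on UNIV g" "bounded (range g)"
  shows "integrable M g"
proof -
  interpret finite_measure M by fact
  obtain B where B: "\<And>x. \<bar>g x\<bar> \<le> B"
    using assms(4) by (auto simp: bounded_iff)
  have "g \<in> borel_measurable M"
    using borel_measurable_continuous_onI[OF assms(3)] measurable_cong_sets[OF assms(2) refl] by blast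
  then show ?thesis
    using B by (intro integrable_const_bound[where B=B]) auto
qed

lemma integral_abs_add_le:
  fixes u v :: "'a \<Rightarrow> real"
  assumes "integrable M u" "integrable M v"
  shows "(\<integral>x. \<bar>u x + v x\<bar> \<partial>M) \<le> (\<integral>x. \<bar>u x\<bar> \<partial>M) + (\<integral>x. \<bar>v x\<bar> \<partial>M)"
proof -
  have "(\<integral>x. \<bar>u x + v x\<bar> \<partial>M) \<le> (\<integral>x. \<bar>u x\<bar> + \<bar>v x\<bar> \<partial>M)"
    using assms by (intro integral_mono) (auto simp: abs_triangle_ineq)
  also have "\<dots> = (\<integral>x. \<bar>u x\<bar> \<partial>M) + (\<integral>x. \<bar>v x\<bar> \<partial>M)"
    using assms by simp
  finally show ?thesis .
qed

lemma finite_measure_compact_open_approx: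
  fixes M :: "'a::{second_countable_topology, complete_space} measure"
  assumes "finite_measure M" "sets M = sets borel" "A \<in> sets borel" "e > 0"
  obtains K U where "compact K" "open U" "K \<subseteq> A" "A \<subseteq> U" "measure M (U - K) < e"
proof -
  interpret finite_measure M by fact
  define \<eta> where "\<eta> = e / 2"
  have \<eta>: "\<eta> > 0" using assms(4) by (simp add: \<eta>_def)
  obtain K where K: "K \<subseteq> A" "compact K" "measure M A < measure M K + \<eta>"
  proof (cases "measure M A < \<eta>")
    case True
    then show ?thesis using that[of "{}"] by simp
  next
    case False
    have "ennreal (measure M A - \<eta>) < emeasure M A"
      using False \<eta> by (simp add: emeasure_eq_measure ennreal_lessI)
    also have "\<dots> = (SUP K \<in> {K. K \<subseteq> A \<and> compact K}. emeasure M K)"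
      by (rule inner_regular[OF assms(2) _ assms(3)]) simp
    finally obtain K where "K \<subseteq> A" "compact K" "ennreal (measure M A - \<eta>) < emeasure M K"
      by (auto simp: less_SUP_iff)
    then show ?thesis using that[of K] False
      by (auto simp: emeasure_eq_measure ennreal_less_iff)
  qed
  obtain U where U: "A \<subseteq> U" "open U" "measure M U < measure M A + \<eta>"
  proof -
    have "(INF U \<in> {U. A \<subseteq> U \<and> open U}. emeasure M U) = emeasure M A"
      by (rule outer_regular[OF assms(2) _ assms(3), symmetric]) simp
    also have "\<dots> < ennreal (measure M A + \<eta>)"
      using \<eta> by (simp add: emeasure_eq_measure ennreal_lessI)
    finally obtain U where "A \<subseteq> U" "open U" "emeasure M U < ennreal (measure M A + \<eta>)"
      by (auto simp: INF_less_iff)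
    then show ?thesis using that[of U]
      by (auto simp: emeasure_eq_measure ennreal_less_iff)
  qed
  have "K \<in> sets M" "U \<in> sets M"
    using K U assms(2) by (auto intro: borel_compact)
  then have "measure M (U - K) < e"
    using finite_measure_Diff K U by (auto simp: \<eta>_def)
  then show ?thesis
    using that K U by blast
qed

lemma L1_approx_indicator:
  fixes M :: "'a::euclidean_space measure"
  assumes fin: "finite_measure M" and sb: "sets M = sets borel" and A: "A \<in> sets M"
  shows "L1_approx_bounded_continuous M (\<lambda>x. indicator A x *\<^sub>R c)"
  unfolding L1_approx_bounded_continuous_def
proof (intro allI impI)
  interpret finite_measure M by fact
  fix \<delta> :: real assume "\<delta> > 0"
  define e where "e = \<delta> / (\<bar>c\<bar> + 1)"
  have "e > 0" using \<open>\<delta> > 0\<close> by (simp add: e_def)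
  obtain K U where KU: "compact K" "open U" "K \<subseteq> A" "A \<subseteq> U" "measure M (U - K) < e"
    using finite_measure_compact_open_approx[OF fin sb _ \<open>e > 0\<close>] A sb by auto
  obtain f0 :: "'a \<Rightarrow> real" where f0: "continuous_on UNIV f0" "\<And>x. f0 x \<in> closed_segment 1 0"
    "\<And>x. x \<in> K \<Longrightarrow> f0 x = 1" "\<And>x. x \<in> -U \<Longrightarrow> f0 x = 0"
    using Urysohn[of K "-U" 1 0] KU compact_imp_closed by blast
  have f0_range: "0 \<le> f0 x" "f0 x \<le> 1" for x
    using f0(2)[of x] by (auto simp: closed_segment_eq_real_ivl)
  have UK: "U - K \<in> sets M"
    using KU sb by (auto intro: borel_compact)
  define g where "g x = c * f0 x" for x
  have g_cont: "continuous_on UNIV g"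
    unfolding g_def by (intro continuous_intros f0(1))
  have g_bounded: "bounded (range g)"
    using f0_range by (auto simp: bounded_iff g_def abs_mult intro!: exI[of _ "\<bar>c\<bar>"] mult_left_le)
  have pointwise: "\<bar>indicator A x *\<^sub>R c - g x\<bar> \<le> \<bar>c\<bar> * indicator (U - K) x" for x
  proof -
    have "\<bar>indicator A x - f0 x\<bar> \<le> indicator (U - K) x"
      using f0(3,4)[of x] f0_range[of x] KU(3,4) by (auto simp: indicator_def)
    moreover have "\<bar>indicator A x *\<^sub>R c - g x\<bar> = \<bar>c\<bar> * \<bar>indicator A x - f0 x\<bar>"
      by (simp add: g_def abs_mult[symmetric] algebra_simps)
    ultimately show ?thesis
      by (simp add: mult_left_mono)
  qed
  have "(\<integral>x. \<bar>indicator A x *\<^sub>R c - g x\<bar> \<partial>M) \<le> (\<integral>x. \<bar>c\<bar> * indicator (U - K) x \<partial>M)"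
    using A UK integrable_bounded_continuous[OF fin sb g_cont g_bounded] pointwise
    by (intro integral_mono integrable_abs integrable_diff integrable_mult_left
        integrable_real_indicator) (auto simp: top.not_eq_extremum[symmetric])
  also have "\<dots> = \<bar>c\<bar> * measure M (U - K)"
    using UK by simp
  also have "\<dots> \<le> \<bar>c\<bar> * e"
    using KU(5) by (intro mult_left_mono) auto
  also have "\<dots> < \<delta>"
    using \<open>\<delta> > 0\<close> by (simp add: e_def field_simps)
  finally show "\<exists>g. continuous_on UNIV g \<and> bounded (range g) \<and>
      (\<integral>x. \<bar>indicator A x *\<^sub>R c - g x\<bar> \<partial>M) < \<delta>"
    using g_cont g_bounded by blast
qed

lemma L1_approx_add:
  assumes fin: "finite_measure M" and sb: "sets M = sets borel"
    and f: "integrable M f" "L1_approx_bounded_continuous M f"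
    and g: "integrable M g" "L1_approx_bounded_continuous M g"
  shows "L1_approx_bounded_continuous M (\<lambda>x. f x + g x)"
  unfolding L1_approx_bounded_continuous_def
proof (intro allI impI)
  fix \<delta> :: real assume "\<delta> > 0"
  then obtain f' g' where f': "continuous_on UNIV f'" "bounded (range f')"
      "(\<integral>x. \<bar>f x - f' x\<bar> \<partial>M) < \<delta> / 2"
    and g': "continuous_on UNIV g'" "bounded (range g')"
      "(\<integral>x. \<bar>g x - g' x\<bar> \<partial>M) < \<delta> / 2"
    using f(2) g(2) unfolding L1_approx_bounded_continuous_def by (meson half_gt_zero)
  have "(\<integral>x. \<bar>f x + g x - (f' x + g' x)\<bar> \<partial>M) =
      (\<integral>x. \<bar>(f x - f' x) + (g x - g' x)\<bar> \<partial>M)"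
    by (simp add: algebra_simps)
  also have "\<dots> \<le> (\<integral>x. \<bar>f x - f' x\<bar> \<partial>M) + (\<integral>x. \<bar>g x - g' x\<bar> \<partial>M)"
    using f g integrable_bounded_continuous[OF fin sb] f' g' by (intro integral_abs_add_le) auto
  also have "\<dots> < \<delta>"
    using f'(3) g'(3) by simp
  finally show "\<exists>h. continuous_on UNIV h \<and> bounded (range h) \<and>
      (\<integral>x. \<bar>f x + g x - h x\<bar> \<partial>M) < \<delta>"
    using f' g' by (intro exI[of _ "\<lambda>x. f' x + g' x"]) (auto intro: continuous_intros bounded_plus_comp)
qed

lemma L1_approx_closed:
  assumes fin: "finite_measure M" and sb: "sets M = sets borel" and f: "integrable M f"
    and approx: "\<And>\<delta>. \<delta> > 0 \<Longrightarrow> \<exists>h. integrable M h \<and> L1_approx_bounded_continuous M h \<and>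
      (\<integral>x. \<bar>f x - h x\<bar> \<partial>M) < \<delta>"
  shows "L1_approx_bounded_continuous M f"
  unfolding L1_approx_bounded_continuous_def
proof (intro allI impI)
  fix \<delta> :: real assume "\<delta> > 0"
  then obtain h where h: "integrable M h" "L1_approx_bounded_continuous M h"
      "(\<integral>x. \<bar>f x - h x\<bar> \<partial>M) < \<delta> / 2"
    using approx by (meson half_gt_zero)
  obtain g where g: "continuous_on UNIV g" "bounded (range g)"
      "(\<integral>x. \<bar>h x - g x\<bar> \<partial>M) < \<delta> / 2"
    using h(2) \<open>\<delta> > 0\<close> unfolding L1_approx_bounded_continuous_def by (meson half_gt_zero)
  have "(\<integral>x. \<bar>f x - g x\<bar> \<partial>M) = (\<integral>x. \<bar>(f x - h x) + (h x - g x)\<bar> \<partial>M)"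
    by simp
  also have "\<dots> \<le> (\<integral>x. \<bar>f x - h x\<bar> \<partial>M) + (\<integral>x. \<bar>h x - g x\<bar> \<partial>M)"
    using f h integrable_bounded_continuous[OF fin sb g(1,2)] by (intro integral_abs_add_le) auto
  also have "\<dots> < \<delta>"
    using h(3) g(3) by simp
  finally show "\<exists>g. continuous_on UNIV g \<and> bounded (range g) \<and> (\<integral>x. \<bar>f x - g x\<bar> \<partial>M) < \<delta>"
    using g by blast
qed

theorem L1_approx_bounded_continuous_integrable:
  fixes M :: "'a::euclidean_space measure"
  assumes fin: "finite_measure M" and sb: "sets M = sets borel" and "integrable M f"
  shows "L1_approx_bounded_continuous M f"
  using \<open>integrable M f\<close>
proof induct
  case (base A c)
  then show ?case by (intro L1_approx_indicator[OF fin sb])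
next
  case (add f g)
  then show ?case by (intro L1_approx_add[OF fin sb])
next
  case (lim f s)
  have "(\<lambda>i. \<integral>x. \<bar>f x - s i x\<bar> \<partial>M) \<longlonglongrightarrow> (\<integral>x. 0 \<partial>M)"
  proof (rule integral_dominated_convergence[where w="\<lambda>x. 3 * \<bar>f x\<bar>"])
    show "AE x in M. (\<lambda>i. \<bar>f x - s i x\<bar>) \<longlonglongrightarrow> 0"
    proof (rule AE_I2)
      fix x assume "x \<in> space M"
      then have "(\<lambda>i. f x - s i x) \<longlonglongrightarrow> f x - f x"
        using lim(3) by (intro tendsto_diff tendsto_const)
      then show "(\<lambda>i. \<bar>f x - s i x\<bar>) \<longlonglongrightarrow> 0"
        by (simp add: tendsto_rabs_zero)
    qed
    show "AE x in M. norm \<bar>f x - s i x\<bar> \<le> 3 * \<bar>f x\<bar>" for i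
      using lim(4)[of _ i] by force
  qed (use lim(1,5) in auto)
  then have "(\<lambda>i. \<integral>x. \<bar>f x - s i x\<bar> \<partial>M) \<longlonglongrightarrow> 0"
    by simp
  then have "\<forall>\<^sub>F i in sequentially. (\<integral>x. \<bar>f x - s i x\<bar> \<partial>M) < \<delta>" if "\<delta> > 0" for \<delta>
    using that by (rule order_tendstoD(2))
  then have "\<exists>i. (\<integral>x. \<bar>f x - s i x\<bar> \<partial>M) < \<delta>" if "\<delta> > 0" for \<delta>
    using that by (auto simp: eventually_sequentially)
  then show ?case
    using lim(1,2,5) by (intro L1_approx_closed[OF fin sb]) blast+
qed

lemma (in prob_space) abs_integral_le_const:
  fixes f :: "'a \<Rightarrow> real"
  assumes "AE x in M. \<bar>f x\<bar> \<le> B"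
  shows "\<bar>\<integral>x. f x \<partial>M\<bar> \<le> B"
proof (cases "integrable M f")
  case True
  have "\<bar>\<integral>x. f x \<partial>M\<bar> \<le> (\<integral>x. \<bar>f x\<bar> \<partial>M)"
    by (rule integral_abs_bound)
  also have "\<dots> \<le> B"
    using True assms by (intro integral_le_const) auto
  finally show ?thesis .
next
  case False
  have "AE x in M. 0 \<le> B"
    using assms by eventually_elim auto
  then show ?thesis
    using False by (simp add: not_integrable_integral_eq)
qed

lemma closed_measure_support: "closed (measure_support \<rho>)"
  unfolding closed_def
proof (rule open_subopen[THEN iffD2], intro ballI)
  fix z assume "z \<in> - measure_support \<rho>"
  then obtain U where "open U" "z \<in> U" "emeasure \<rho> U = 0"
    by (auto simp: measure_support_def)
  then show "\<exists>T. open T \<and> z \<in> T \<and> T \<subseteq> - measure_support \<rho>"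
    by (intro exI[of _ U]) (auto simp: measure_support_def)
qed

lemma f_c_diff_le_L1_dist:
  assumes sb: "sets \<rho> = sets borel"
    and K_cont: "continuous_on UNIV (\<lambda>(s, t). K s t)" and K_bound: "\<And>s t. \<bar>K s t\<bar> \<le> 1"
    and c: "integrable \<rho> c" and g: "integrable \<rho> g"
  shows "\<bar>f_c \<rho> K c x - f_c \<rho> K g x\<bar> \<le> (\<integral>z. \<bar>c z - g z\<bar> \<partial>\<rho>)"
proof -
  define S where "S = measure_support \<rho>"
  define \<phi> where "\<phi> = (\<lambda>z. K (fst z \<bullet> x + fst (snd z)) (snd (snd z)))"
  have S: "S \<in> sets \<rho>"
    unfolding S_def sb by (rule borel_closed[OF closed_measure_support])
  have "continuous_on UNIV (\<lambda>z. (\<lambda>(s, t). K s t) (fst z \<bullet> x + fst (snd z), snd (snd z)))"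
    by (rule continuous_on_compose2[OF K_cont]) (auto intro!: continuous_intros)
  then have "continuous_on UNIV \<phi>"
    by (simp add: \<phi>_def)
  then have \<phi>_meas: "\<phi> \<in> borel_measurable \<rho>"
    unfolding measurable_cong_sets[OF sb refl] by (rule borel_measurable_continuous_onI)
  have integrable_weighted: "integrable \<rho> (\<lambda>z. indicator S z *\<^sub>R (h z * \<phi> z))"
    if "integrable \<rho> h" for h
  proof (intro integrable_mult_indicator[OF S] Bochner_Integration.integrable_bound[OF integrable_abs[OF that]])
    show "(\<lambda>z. h z * \<phi> z) \<in> borel_measurable \<rho>"
      using that \<phi>_meas by measurable
    show "AE z in \<rho>. norm (h z * \<phi> z) \<le> norm \<bar>h z\<bar>"
      using K_bound by (auto simp: \<phi>_def abs_mult mult_left_le)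
  qed
  have "f_c \<rho> K c x - f_c \<rho> K g x =
      (\<integral>z. indicator S z *\<^sub>R (c z * \<phi> z) - indicator S z *\<^sub>R (g z * \<phi> z) \<partial>\<rho>)"
    unfolding f_c_def set_lebesgue_integral_def S_def[symmetric]
    using integrable_weighted[OF c] integrable_weighted[OF g] by (simp add: \<phi>_def)
  also have "\<bar>\<dots>\<bar> \<le> (\<integral>z. \<bar>c z - g z\<bar> \<partial>\<rho>)"
  proof (rule integral_abs_bound_integral)
    fix z
    have "\<bar>indicator S z *\<^sub>R (c z * \<phi> z) - indicator S z *\<^sub>R (g z * \<phi> z)\<bar>
        = \<bar>indicator S z * \<phi> z\<bar> * \<bar>c z - g z\<bar>"
      by (simp add: algebra_simps abs_mult[symmetric])
    also have "\<dots> \<le> \<bar>c z - g z\<bar>"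
      using K_bound by (intro mult_left_le_one_le) (auto simp: \<phi>_def indicator_def abs_mult)
    finally show "\<bar>indicator S z *\<^sub>R (c z * \<phi> z) - indicator S z *\<^sub>R (g z * \<phi> z)\<bar> \<le> \<bar>c z - g z\<bar>" .
  qed (use integrable_weighted[OF c] integrable_weighted[OF g] c g in auto)
  finally show ?thesis .
qed

theorem lemma10:
  fixes M :: "'w measure"
    and k :: "'w \<Rightarrow> real \<Rightarrow> real \<Rightarrow> real"
    and K :: "real \<Rightarrow> real \<Rightarrow> real"
    and \<rho> :: "((real^'n) \<times> real \<times> real) measure"
  assumes "prob_space M"
    and "(\<lambda>(\<omega>, s, t). k \<omega> s t) \<in> borel_measurable (M \<Otimes>\<^sub>M (borel \<Otimes>\<^sub>M borel))"
    and "\<And>s t. AE \<omega> in M. \<bar>k \<omega> s t\<bar> \<le> 1"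
    and "\<And>s t. K s t = (\<integral>\<omega>. k \<omega> s t \<partial>M)"
    and "continuous_on UNIV (\<lambda>(s, t). K s t)"
    and "pos_def_kernel K"
    and "prob_space \<rho>"
    and "sets \<rho> = sets borel"
    and "compact (measure_support \<rho>)"
    and "square_integrable \<rho> c"
    and "compact X"
    and "\<epsilon> > 0"
  shows "\<exists>c'. continuous_on (measure_support \<rho>) c' \<and>
           (\<forall>x\<in>X. \<bar>f_c \<rho> K c x - f_c \<rho> K c' x\<bar> < \<epsilon>)"
proof -
  interpret \<rho>: prob_space \<rho> by fact
  have sb: "sets \<rho> = sets borel" by fact
  have "integrable \<rho> c"
    using \<open>square_integrable \<rho> c\<close> \<rho>.square_integrable_imp_integrable
    by (auto simp: square_integrable_def)
  then obtain g where g: "continuous_on UNIV g" "bounded (range g)"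
    "(\<integral>z. \<bar>c z - g z\<bar> \<partial>\<rho>) < \<epsilon>"
    using L1_approx_bounded_continuous_integrable[OF \<rho>.finite_measure_axioms sb] \<open>\<epsilon> > 0\<close>
    unfolding L1_approx_bounded_continuous_def by blast
  have "\<bar>K s t\<bar> \<le> 1" for s t
    using prob_space.abs_integral_le_const[OF assms(1,3)] assms(4) by simp
  then have "\<bar>f_c \<rho> K c x - f_c \<rho> K g x\<bar> < \<epsilon>" for x
    using f_c_diff_le_L1_dist[OF sb assms(5)] \<open>integrable \<rho> c\<close>
      integrable_bounded_continuous[OF \<rho>.finite_measure_axioms sb g(1,2)] g(3)
    by (meson order.strict_trans1)
  then show ?thesis
    using continuous_on_subset[OF g(1)] by blast
qed

end
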